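(* Let $B=\bigoplus_{i\in\mathbb{Z}}B_i$ be a $\mathbb{Z}$-graded integral domain with $e(B)=1$. (a) If $S\subseteq\mathbb{Z}\setminus\{0\}$ is such that no height-$1$ prime ideal of $B$ contains $\bigcup_{i\in S}B_i$, then every element of $\Pi(B)$ is a prime factor of some element of $S$. (b) If no height-$1$ prime ideal of $B$ contains $\bigcup_{i\in\mathbb{Z}\setminus\{0\}}B_i$ and $B$ is noetherian, then $\Pi(B)$ is finite. (c) If some height-$1$ prime ideal of $B$ contains $\bigcup_{i\in\mathbb{Z}\setminus\{0\}}B_i$, then $\Pi(B)$ is the set of all prime numbers and $\Pi^*(B)=\{1\}$.
   Context: For a $\mathbb{Z}$-graded domain $C$, $e(C)=\gcd\{i\in\mathbb{Z}:C_i\neq0\}$. $\Pi(B)$ is the set of primes $p$ with $p\mid e(B/\mathfrak{p})$ for some homogeneous height-$1$ prime ideal $\mathfrak{p}$ of $B$; $\Pi^*(B)$ is the set of positive integers not divisible by any element of $\Pi(B)$. *)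

theory Defs
  imports "HOL-Algebra.Algebra"
begin

definition Z_grading :: "('a, 'b) ring_scheme \<Rightarrow> (int \<Rightarrow> 'a set) \<Rightarrow> bool" where
  "Z_grading R G \<longleftrightarrow>
     (\<forall>i. additive_subgroup (G i) R) \<and>
     (\<forall>i j. \<forall>x\<in>G i. \<forall>y\<in>G j. x \<otimes>\<^bsub>R\<^esub> y \<in> G (i + j)) \<and>
     (\<forall>x\<in>carrier R. \<exists>!f. (\<forall>i. f i \<in> G i) \<and> finite {i. f i \<noteq> \<zero>\<^bsub>R\<^esub>} \<and>
            x = finsum R f {i. f i \<noteq> \<zero>\<^bsub>R\<^esub>})"

definition graded_domain :: "('a, 'b) ring_scheme \<Rightarrow> (int \<Rightarrow> 'a set) \<Rightarrow> bool" where
  "graded_domain R G \<longleftrightarrow> domain R \<and> Z_grading R G"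

text \<open>e(C) = gcd of the degrees with nonzero component (Gcd on int is nonnegative).\<close>
definition grading_e :: "('a, 'b) ring_scheme \<Rightarrow> (int \<Rightarrow> 'a set) \<Rightarrow> int" where
  "grading_e R G = Gcd {i. G i \<noteq> {\<zero>\<^bsub>R\<^esub>}}"

definition quot_component :: "('a, 'b) ring_scheme \<Rightarrow> (int \<Rightarrow> 'a set) \<Rightarrow> 'a set \<Rightarrow> int \<Rightarrow> 'a set set" where
  "quot_component R G P i = (\<lambda>x. a_r_coset R P x) ` G i"

definition quot_e :: "('a, 'b) ring_scheme \<Rightarrow> (int \<Rightarrow> 'a set) \<Rightarrow> 'a set \<Rightarrow> int" where
  "quot_e R G P = grading_e (R Quot P) (quot_component R G P)"

definition homogeneous_ideal :: "('a, 'b) ring_scheme \<Rightarrow> (int \<Rightarrow> 'a set) \<Rightarrow> 'a set \<Rightarrow> bool" where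
  "homogeneous_ideal R G I \<longleftrightarrow> ideal I R \<and> genideal R (I \<inter> (\<Union>i. G i)) = I"

definition height1_prime :: "('a, 'b) ring_scheme \<Rightarrow> 'a set \<Rightarrow> bool" where
  "height1_prime R P \<longleftrightarrow> primeideal P R \<and> P \<noteq> {\<zero>\<^bsub>R\<^esub>} \<and>
     (\<forall>Q. primeideal Q R \<and> Q \<subset> P \<longrightarrow> Q = {\<zero>\<^bsub>R\<^esub>})"

definition Pi_set :: "('a, 'b) ring_scheme \<Rightarrow> (int \<Rightarrow> 'a set) \<Rightarrow> nat set" where
  "Pi_set R G = {p. Factorial_Ring.prime p \<and> (\<exists>P. homogeneous_ideal R G P \<and> height1_prime R P \<and> int p dvd quot_e R G P)}"

definition Pi_star :: "('a, 'b) ring_scheme \<Rightarrow> (int \<Rightarrow> 'a set) \<Rightarrow> nat set" where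
  "Pi_star R G = {n. 0 < n \<and> (\<forall>p\<in>Pi_set R G. \<not> p dvd n)}"

end

theory Submission
  imports Defs
begin

text \<open>
  A homogeneous height-1 prime P contributes to \<open>\<Pi>(B)\<close> only through the gcd e(B/P) of
  the degrees i with \<open>B\<^sub>i \<not>\<subseteq> P\<close>, so e(B/P) divides every degree i whose component
  is not swallowed by P.  (a) follows at once.  For (b), noetherianity lets finitely many
  homogeneous elements of nonzero degree generate the ideal generated by all of them; their
  finitely many degrees then satisfy the hypothesis of (a).  For (c), a prime P containing
  every component of nonzero degree is automatically homogeneous, and B/P is concentrated in
  degree 0, so e(B/P) = 0 is divisible by every prime.
\<close>

lemma (in ideal) I_finsum_closed:
  assumes "f \<in> A \<rightarrow> I"
  shows "finsum R f A \<in> I"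
proof (cases "finite A")
  case True
  then show ?thesis
    using assms
  proof (induction A rule: finite_induct)
    case empty
    then show ?case by (simp add: zero_closed)
  next
    case (insert a A)
    then have "finsum R f (insert a A) = f a \<oplus> finsum R f A"
      using a_subset by (intro finsum_insert) auto
    with insert show ?case by (simp add: a_closed)
  qed
next
  case False
  then show ?thesis by (simp add: finsum_infinite zero_closed)
qed

lemma (in noetherian_ring) genideal_eq_genideal_finite_subset:
  assumes "Y \<subseteq> carrier R"
  obtains Y' where "finite Y'" "Y' \<subseteq> Y" "Idl Y = Idl Y'"
proof -
  define S where "S = {Idl Y' | Y'. finite Y' \<and> Y' \<subseteq> Y}"
  have "\<exists>M\<in>S. \<forall>N\<in>S. M \<subseteq> N \<longrightarrow> N = M"
  proof (rule subset_Zorn)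
    fix C assume C: "subset.chain S C"
    show "\<exists>U\<in>S. \<forall>N\<in>C. N \<subseteq> U"
    proof (cases "C = {}")
      case True
      have "Idl {} \<in> S" unfolding S_def by blast
      with True show ?thesis by blast
    next
      case False
      have "S \<subseteq> {I. ideal I R}"
        using assms genideal_ideal unfolding S_def by blast
      with C have "subset.chain {I. ideal I R} C"
        unfolding pred_on.chain_def by blast
      with False have "\<Union>C \<in> C" by (rule ideal_chain_is_trivial)
      moreover have "C \<subseteq> S" using C by (simp add: pred_on.chain_def)
      ultimately show ?thesis by (intro bexI[of _ "\<Union>C"]) auto
    qed
  qed
  then obtain M where "M \<in> S" and maximal: "\<And>N. N \<in> S \<Longrightarrow> M \<subseteq> N \<Longrightarrow> N = M"
    by blast
  then obtain Y' where Y': "finite Y'" "Y' \<subseteq> Y" "M = Idl Y'"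
    unfolding S_def by blast
  have "Y \<subseteq> Idl Y'"
  proof
    fix y assume y: "y \<in> Y"
    have carrier: "insert y Y' \<subseteq> carrier R" using assms y Y'(2) by blast
    have "Idl (insert y Y') \<in> S" using y Y' unfolding S_def by blast
    moreover have "Idl Y' \<subseteq> Idl (insert y Y')" by (rule subset_Idl_subset[OF carrier]) blast
    ultimately have "Idl (insert y Y') = Idl Y'" using maximal Y'(3) by blast
    then show "y \<in> Idl Y'" using genideal_self[OF carrier] by blast
  qed
  then have "Idl Y \<subseteq> Idl Y'"
    using assms Y'(2) by (intro genideal_minimal genideal_ideal) auto
  moreover have "Idl Y' \<subseteq> Idl Y"
    using assms Y'(2) by (rule subset_Idl_subset)
  ultimately show thesis using that Y'(1,2) by blast
qed

lemma Z_grading_component_carrier: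
  assumes "Z_grading R G"
  shows "G i \<subseteq> carrier R"
  using assms unfolding Z_grading_def by (meson additive_subgroup.a_subset)

lemma Z_grading_zero_in_component:
  assumes "Z_grading R G"
  shows "\<zero>\<^bsub>R\<^esub> \<in> G i"
  using assms unfolding Z_grading_def by (meson additive_subgroup.zero_closed)

lemma (in ideal) quot_e_dvd_degree:
  assumes "x \<in> G i" "x \<in> carrier R" "x \<notin> I"
  shows "quot_e R G I dvd i"
proof -
  have "a_r_coset R I x \<noteq> I"
    using a_rcos_self[OF assms(2)] assms(3) by auto
  with assms(1) have "quot_component R G I i \<noteq> {\<zero>\<^bsub>R Quot I\<^esub>}"
    unfolding quot_component_def FactRing_def by auto
  then show ?thesis
    unfolding quot_e_def grading_e_def by (simp add: Gcd_dvd)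
qed

lemma (in ideal) quot_e_eq_0:
  assumes "Z_grading R G" "(\<Union>i\<in>-{0}. G i) \<subseteq> I"
  shows "quot_e R G I = 0"
proof -
  have "quot_component R G I i = {\<zero>\<^bsub>R Quot I\<^esub>}" if "i \<noteq> 0" for i
  proof -
    have "a_r_coset R I x = I" if "x \<in> G i" for x
      using \<open>i \<noteq> 0\<close> that assms(2) a_rcos_const by blast
    with Z_grading_zero_in_component[OF assms(1)] show ?thesis
      unfolding quot_component_def FactRing_def by auto
  qed
  then have "{i. quot_component R G I i \<noteq> {\<zero>\<^bsub>R Quot I\<^esub>}} \<subseteq> {0}"
    by blast
  then show ?thesis
    unfolding quot_e_def grading_e_def by simp
qed

lemma (in ideal) homogeneous_ideal_if_nonzero_degrees_subset:
  assumes grading: "Z_grading R G" and nonzero_degrees: "(\<Union>i\<in>-{0}. G i) \<subseteq> I"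
  shows "homogeneous_ideal R G I"
proof -
  let ?K = "Idl (I \<inter> (\<Union>i. G i))"
  have gens: "I \<inter> (\<Union>i. G i) \<subseteq> carrier R" using a_subset by blast
  interpret K: ideal ?K R by (rule genideal_ideal[OF gens])
  have "I \<subseteq> ?K"
  proof
    fix x assume "x \<in> I"
    then have "x \<in> carrier R" using a_subset by blast
    then obtain f where f: "\<forall>i. f i \<in> G i" "finite {i. f i \<noteq> \<zero>}" "x = finsum R f {i. f i \<noteq> \<zero>}"
      using grading unfolding Z_grading_def by metis
    define D where "D = {i. f i \<noteq> \<zero>} - {0}"
    have f_carrier: "f i \<in> carrier R" for i
      using f(1) Z_grading_component_carrier[OF grading] by blast
    have "x = f 0 \<oplus> finsum R f D"
    proof (cases "f 0 = \<zero>")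
      case True
      then have "D = {i. f i \<noteq> \<zero>}" unfolding D_def by blast
      with True f(3) f_carrier show ?thesis by simp
    next
      case False
      then have "{i. f i \<noteq> \<zero>} = insert 0 D" "0 \<notin> D" "finite D"
        using f(2) unfolding D_def by blast+
      with f(3) f_carrier show ?thesis by simp
    qed
    moreover have "finsum R f D \<in> I"
      using f(1) nonzero_degrees unfolding D_def by (intro I_finsum_closed) blast
    ultimately have "f 0 = x \<oplus> \<ominus> finsum R f D" "finsum R f D \<in> I"
      using f_carrier a_subset by (auto simp: add.inv_solve_right)
    then have "f 0 \<in> I" using \<open>x \<in> I\<close> by (simp add: a_closed a_inv_closed)
    then have "f i \<in> I" for i
      using f(1) nonzero_degrees by (cases "i = 0") auto
    then have "f i \<in> ?K" for i
      using f(1) genideal_self[OF gens] by blast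
    then have "finsum R f {i. f i \<noteq> \<zero>} \<in> ?K"
      by (intro K.I_finsum_closed) simp
    with f(3) show "x \<in> ?K" by simp
  qed
  moreover have "?K \<subseteq> I" by (rule genideal_minimal[OF is_ideal]) blast
  ultimately have "?K = I" by (rule equalityI[rotated])
  then show ?thesis
    unfolding homogeneous_ideal_def using is_ideal by simp
qed

lemma Pi_set_dvd_degree:
  assumes grading: "Z_grading R G"
    and not_contained: "\<forall>P. height1_prime R P \<longrightarrow> \<not> (\<Union>i\<in>S. G i) \<subseteq> P"
    and p: "p \<in> Pi_set R G"
  shows "\<exists>s\<in>S. int p dvd s"
proof -
  obtain P where P: "height1_prime R P" "int p dvd quot_e R G P"
    using p unfolding Pi_set_def by blast
  then interpret P: ideal P R
    unfolding height1_prime_def primeideal_def by blast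
  from P(1) not_contained obtain s x where "s \<in> S" "x \<in> G s" "x \<notin> P"
    by blast
  moreover have "x \<in> carrier R"
    using \<open>x \<in> G s\<close> Z_grading_component_carrier[OF grading] by blast
  ultimately have "quot_e R G P dvd s" by (intro P.quot_e_dvd_degree)
  with P(2) \<open>s \<in> S\<close> show ?thesis using dvd_trans by blast
qed

lemma finite_Pi_set:
  assumes grading: "Z_grading R G" and "noetherian_ring R"
    and not_contained: "\<forall>P. height1_prime R P \<longrightarrow> \<not> (\<Union>i\<in>-{0}. G i) \<subseteq> P"
  shows "finite (Pi_set R G)"
proof -
  interpret noetherian_ring R by fact
  let ?Y = "\<Union>i\<in>-{0}. G i"
  have Y_carrier: "?Y \<subseteq> carrier R" using Z_grading_component_carrier[OF grading] by blast
  obtain Y' where Y': "finite Y'" "Y' \<subseteq> ?Y" "genideal R ?Y = genideal R Y'"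
    using genideal_eq_genideal_finite_subset[OF Y_carrier] by blast
  obtain S where S: "finite S" "S \<subseteq> -{0}" "Y' \<subseteq> (\<Union>i\<in>S. G i)"
  proof -
    obtain \<F> where "finite \<F>" "\<F> \<subseteq> G ` (-{0})" "Y' \<subseteq> \<Union>\<F>"
      using finite_subset_Union[OF Y'(1,2)] by blast
    with finite_subset_image that show thesis by metis
  qed
  have "\<not> (\<Union>i\<in>S. G i) \<subseteq> P" if "height1_prime R P" for P
  proof
    assume "(\<Union>i\<in>S. G i) \<subseteq> P"
    moreover have "ideal P R" using that unfolding height1_prime_def primeideal_def by blast
    ultimately have "genideal R Y' \<subseteq> P" using S(3) by (intro genideal_minimal) auto
    then have "?Y \<subseteq> P" using Y'(3) genideal_self[OF Y_carrier] by blast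
    with that not_contained show False by blast
  qed
  then have "Pi_set R G \<subseteq> (\<Union>s\<in>S. int -` {d. d dvd s})"
    using Pi_set_dvd_degree[OF grading] by blast
  moreover have "finite (int -` {d. d dvd s})" if "s \<in> S" for s
    using that S(2) by (intro finite_vimageI finite_divisors_int) (auto simp: inj_on_def)
  ultimately show ?thesis using S(1) by (meson finite_UN_I finite_subset)
qed

lemma Pi_set_eq_primes:
  assumes grading: "Z_grading R G"
    and P: "height1_prime R P" and nonzero_degrees: "(\<Union>i\<in>-{0}. G i) \<subseteq> P"
  shows "Pi_set R G = {p. Factorial_Ring.prime p}"
proof -
  interpret P: ideal P R
    using P unfolding height1_prime_def primeideal_def by blast
  have "homogeneous_ideal R G P"
    using grading nonzero_degrees by (rule P.homogeneous_ideal_if_nonzero_degrees_subset)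
  moreover have "quot_e R G P = 0"
    using grading nonzero_degrees by (rule P.quot_e_eq_0)
  moreover have "int p dvd quot_e R G P" for p
    using \<open>quot_e R G P = 0\<close> by simp
  ultimately show ?thesis
    unfolding Pi_set_def using P by blast
qed

lemma Pi_star_eq_1_if_Pi_set_eq_primes:
  assumes "Pi_set R G = {p. Factorial_Ring.prime p}"
  shows "Pi_star R G = {1}"
proof -
  have "n = 1" if "0 < n" "\<forall>p. Factorial_Ring.prime p \<longrightarrow> \<not> p dvd n" for n :: nat
    using that prime_factor_nat by blast
  then show ?thesis
    unfolding Pi_star_def assms by auto
qed

theorem lemma3p12:
  fixes R :: "('a, 'b) ring_scheme" and G :: "int \<Rightarrow> 'a set"
  assumes "graded_domain R G" and "grading_e R G = 1"
  shows "(\<forall>S. 0 \<notin> S \<and> (\<forall>P. height1_prime R P \<longrightarrow> \<not> (\<Union>i\<in>S. G i) \<subseteq> P)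
            \<longrightarrow> (\<forall>p\<in>Pi_set R G. \<exists>s\<in>S. int p dvd s))
       \<and> ((\<forall>P. height1_prime R P \<longrightarrow> \<not> (\<Union>i\<in>-{0}. G i) \<subseteq> P) \<and> noetherian_ring R
            \<longrightarrow> finite (Pi_set R G))
       \<and> ((\<exists>P. height1_prime R P \<and> (\<Union>i\<in>-{0}. G i) \<subseteq> P)
            \<longrightarrow> Pi_set R G = {p. Factorial_Ring.prime p} \<and> Pi_star R G = {1})"
proof -
  have grading: "Z_grading R G"
    using assms(1) unfolding graded_domain_def by blast
  show ?thesis
  proof (intro conjI impI allI ballI; elim conjE exE)
    show "\<exists>s\<in>S. int p dvd s"
      if "\<forall>P. height1_prime R P \<longrightarrow> \<not> (\<Union>i\<in>S. G i) \<subseteq> P" and "p \<in> Pi_set R G" for S p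
      using Pi_set_dvd_degree[OF grading] that by blast
    show "finite (Pi_set R G)"
      if "\<forall>P. height1_prime R P \<longrightarrow> \<not> (\<Union>i\<in>-{0}. G i) \<subseteq> P" and "noetherian_ring R"
      using finite_Pi_set[OF grading] that by blast
    show primes: "Pi_set R G = {p. Factorial_Ring.prime p}"
      if "height1_prime R P" and "(\<Union>i\<in>-{0}. G i) \<subseteq> P" for P
      using Pi_set_eq_primes[OF grading] that by blast
    show "Pi_star R G = {1}"
      if "height1_prime R P" and "(\<Union>i\<in>-{0}. G i) \<subseteq> P" for P
      using Pi_star_eq_1_if_Pi_set_eq_primes[OF primes[OF that]] .
  qed
qed

end
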